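(* Let $N\ge 5$ be an odd integer. If $A$ is an efficiently structured polyomino with square $(N-2)\times(N-2)$ interior, then every space of the interior lying in an odd row of $W$ (i.e. every interior space $(i,j)$ with $i$ and $j$ both odd) is a hole of $A$.
   Context: A polyomino is a finite union of closed unit tiles, meeting only in whole edges, with connected interior; holes are bounded components of the complement, area of a hole = number of unit squares filling it; acyclic means the dual graph (tiles, adjacency along edges) is a tree. A polyomino with $n$ tiles and $h$ holes is efficiently structured if it is acyclic, every hole has area one, and its number of outer (non-hole) boundary edges equals $2\lceil 2\sqrt{n+h}\,\rceil$. $A$ has square $(N-2)\times(N-2)$ interior if its bounding box is $N\times N$ and every space of the outer ring of the bounding box except possibly the four corners is a tile; the interior is the inner $(N-2)\times(N-2)$ square, with spaces indexed $(i,j)$, $1\le i,j\le N-2$ from the top-left, and $W$ the spaces with $i+j$ even. *)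

theory Defs
  imports Complex_Main
begin

type_synonym cell = "int \<times> int"

text \<open>Unit squares (spaces) of the plane are indexed by integer pairs (row, column);
  two spaces are adjacent iff they share a whole edge.\<close>
definition adj :: "cell \<Rightarrow> cell \<Rightarrow> bool" where
  "adj p q \<longleftrightarrow> \<bar>fst p - fst q\<bar> + \<bar>snd p - snd q\<bar> = 1"

definition adj_in :: "cell set \<Rightarrow> cell \<Rightarrow> cell \<Rightarrow> bool" where
  "adj_in S p q \<longleftrightarrow> p \<in> S \<and> q \<in> S \<and> adj p q"

definition connected_cells :: "cell set \<Rightarrow> bool" where
  "connected_cells S \<longleftrightarrow> (\<forall>p\<in>S. \<forall>q\<in>S. (adj_in S)\<^sup>*\<^sup>* p q)"

text \<open>A polyomino (set of tiles): finite, nonempty, with connected interior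
  (equivalently, tiles connected through shared edges).\<close>
definition polyomino :: "cell set \<Rightarrow> bool" where
  "polyomino A \<longleftrightarrow> finite A \<and> A \<noteq> {} \<and> connected_cells A"

text \<open>Connected components of the complement (spaces connected through shared edges;
  corner contacts do not connect the open complement).  Holes are the bounded,
  i.e. finite, components.\<close>
definition comp_of :: "cell set \<Rightarrow> cell \<Rightarrow> cell set" where
  "comp_of S p = {q. (adj_in S)\<^sup>*\<^sup>* p q}"

definition holes :: "cell set \<Rightarrow> cell set set" where
  "holes A = {H. \<exists>p. p \<notin> A \<and> H = comp_of (- A) p \<and> finite H}"

text \<open>Acyclic: the dual graph (tiles, adjacency along edges) is a tree, i.e.
  connected and without cycles (a cycle = a list of at least 3 distinct tiles,
  consecutive ones adjacent, the last adjacent to the first).\<close>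
definition has_cycle :: "cell set \<Rightarrow> bool" where
  "has_cycle A \<longleftrightarrow> (\<exists>xs. length xs \<ge> 3 \<and> distinct xs \<and> set xs \<subseteq> A \<and>
      (\<forall>i < length xs - 1. adj (xs ! i) (xs ! Suc i)) \<and> adj (last xs) (hd xs))"

definition acyclic_poly :: "cell set \<Rightarrow> bool" where
  "acyclic_poly A \<longleftrightarrow> connected_cells A \<and> \<not> has_cycle A"

text \<open>Outer boundary edges: edges between a tile and a non-tile space that
  does not belong to a hole (each such edge is identified with the pair
  (tile, outside space)).\<close>
definition outer_boundary :: "cell set \<Rightarrow> (cell \<times> cell) set" where
  "outer_boundary A = {(p, q). p \<in> A \<and> q \<notin> A \<and> adj p q \<and> (\<forall>H\<in>holes A. q \<notin> H)}"

definition efficiently_structured :: "cell set \<Rightarrow> bool" where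
  "efficiently_structured A \<longleftrightarrow> polyomino A \<and> acyclic_poly A \<and>
     (\<forall>H\<in>holes A. card H = 1) \<and>
     card (outer_boundary A) =
       2 * nat \<lceil>2 * sqrt (real (card A + card (holes A)))\<rceil>"

text \<open>Square (N-2)x(N-2) interior, with the bounding box's top-left space at (x0, y0):
  the bounding box is N x N and every non-corner space of its outer ring is a tile.
  Interior space (i,j), 1 \<le> i,j \<le> N-2, is the space (x0 + i, y0 + j).\<close>
definition square_interior :: "cell set \<Rightarrow> nat \<Rightarrow> int \<Rightarrow> int \<Rightarrow> bool" where
  "square_interior A N x0 y0 \<longleftrightarrow>
     A \<subseteq> {x0 .. x0 + int N - 1} \<times> {y0 .. y0 + int N - 1} \<and>
     (\<forall>i j. 0 \<le> i \<and> i \<le> int N - 1 \<and> 0 \<le> j \<and> j \<le> int N - 1 \<and>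
        (i = 0 \<or> i = int N - 1 \<or> j = 0 \<or> j = int N - 1) \<and>
        \<not> ((i = 0 \<or> i = int N - 1) \<and> (j = 0 \<or> j = int N - 1))
        \<longrightarrow> (x0 + i, y0 + j) \<in> A)"

end

theory Submission
  imports Defs
begin

text \<open>
  Translate \<open>A\<close> so that its bounding box is \<open>[0, N - 1]\<^sup>2\<close> and call the non-tiles of the
  box gaps: these are the one-cell holes inside and the missing corners, and no two gaps share
  an edge.  Counting the sides of all tiles, with \<open>card A - 1\<close> shared sides (the dual graph is
  a tree) and at most \<open>4 N\<close> outer ones, efficiency gives \<open>(N - 1)\<^sup>2 \<le> 3 I + C\<close> for \<open>I\<close> inner
  gaps and \<open>C\<close> missing corners.

  Join gaps touching at a corner, and join the missing corners to one exterior vertex.  An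
  inner gap lies in four of the \<open>(N - 1)\<^sup>2\<close> \<open>2 \<times> 2\<close> blocks of the box, a corner in one, and a
  block containing two gaps contains a diagonal pair; so this graph has at least as many edges
  as gaps.  It has no cycle, since a cycle would separate two tiles of the connected set of
  tiles, as a crossing-parity argument shows.  Hence it is a tree: every gap is reached from a
  corner by diagonal steps and has even coordinate sum, since \<open>N\<close> is odd.  So every cell with
  odd coordinate sum is a tile, and then a tile with both coordinates odd would, on a path of
  tiles to an even-even tile of the frame, complete a \<open>2 \<times> 2\<close> square of tiles.
\<close>

section \<open>Acyclic relations\<close>

definition has_cycle_rel :: "('a \<Rightarrow> 'a \<Rightarrow> bool) \<Rightarrow> 'a set \<Rightarrow> bool" where
  "has_cycle_rel R S \<longleftrightarrow> (\<exists>xs. length xs \<ge> 3 \<and> distinct xs \<and> set xs \<subseteq> S \<and>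
      (\<forall>i < length xs - 1. R (xs ! i) (xs ! Suc i)) \<and> R (last xs) (hd xs))"

text \<open>Edges are ordered pairs: for a symmetric relation every edge is counted twice.\<close>
definition edges :: "('a \<Rightarrow> 'a \<Rightarrow> bool) \<Rightarrow> 'a set \<Rightarrow> ('a \<times> 'a) set" where
  "edges R S = {(x, y). x \<in> S \<and> y \<in> S \<and> R x y}"

lemma has_cycle_rel_mono: "has_cycle_rel R S \<Longrightarrow> S \<subseteq> T \<Longrightarrow> has_cycle_rel R T"
  unfolding has_cycle_rel_def by blast

lemma has_cycle_eq_rel: "has_cycle A = has_cycle_rel adj A"
  unfolding has_cycle_def has_cycle_rel_def by simp

lemma finite_edges: "finite S \<Longrightarrow> finite (edges R S)"
  unfolding edges_def by (rule finite_subset[of _ "S \<times> S"]) auto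

lemma nonbacktracking_walk_has_cycle:
  assumes fin: "finite S" and irrefl: "\<And>x. \<not> R x x"
    and walk: "\<And>k. w k \<in> S \<and> R (w k) (w (Suc k))"
    and nonback: "\<And>k. w (Suc (Suc k)) \<noteq> w k"
  shows "has_cycle_rel R S"
proof -
  have "\<not> inj_on w {..card S}"
  proof
    assume "inj_on w {..card S}"
    then have "card (w ` {..card S}) = Suc (card S)" by (simp add: card_image)
    moreover have "w ` {..card S} \<subseteq> S" using walk by auto
    ultimately show False using card_mono[OF fin] by (metis Suc_n_not_le_n)
  qed
  then have "\<exists>j. \<exists>i<j. w i = w j" unfolding inj_on_def by (metis linorder_neqE_nat)
  then obtain j where "\<exists>i<j. w i = w j" and first: "\<And>j'. j' < j \<Longrightarrow> \<not> (\<exists>i<j'. w i = w j')"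
    using exists_least_iff[of "\<lambda>j. \<exists>i<j. w i = w j"] by blast
  then obtain i where ij: "i < j" "w i = w j" by blast
  have "inj_on w {..<j}"
    by (rule inj_onI) (metis first lessThan_iff linorder_neqE_nat)
  then have "inj_on w {i..<j}" by (rule inj_on_subset) auto
  define xs where "xs = map w [i..<j]"
  have "j \<noteq> Suc i" using walk[of i] ij irrefl by auto
  moreover have "j \<noteq> Suc (Suc i)" using ij nonback[of i] by auto
  ultimately have "length xs \<ge> 3" using ij(1) unfolding xs_def by simp
  moreover have "distinct xs" unfolding xs_def using \<open>inj_on w {i..<j}\<close> by (simp add: distinct_map)
  moreover have "set xs \<subseteq> S" unfolding xs_def using walk by auto
  moreover have "\<forall>k < length xs - 1. R (xs ! k) (xs ! Suc k)"
    unfolding xs_def using walk by (simp add: nth_append)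
  moreover have "R (last xs) (hd xs)"
    unfolding xs_def using ij walk[of "j - 1"] by (simp add: last_map hd_map hd_upt)
  ultimately show ?thesis unfolding has_cycle_rel_def by blast
qed

lemma acyclic_has_leaf:
  assumes fin: "finite S" and "S \<noteq> {}" and irrefl: "\<And>x. \<not> R x x"
    and acyclic: "\<not> has_cycle_rel R S"
  obtains v where "v \<in> S" "card {y \<in> S. R v y} \<le> 1"
proof (rule ccontr)
  assume "\<not> thesis"
  then have "\<And>v. v \<in> S \<Longrightarrow> \<not> card {y \<in> S. R v y} \<le> Suc 0" using that by auto
  then have "\<And>v. v \<in> S \<Longrightarrow> \<exists>y1 y2. y1 \<in> S \<and> y2 \<in> S \<and> y1 \<noteq> y2 \<and> R v y1 \<and> R v y2"
    using fin by (fastforce simp: card_le_Suc0_iff_eq)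
  then have "\<forall>u v. \<exists>y. v \<in> S \<longrightarrow> y \<in> S \<and> R v y \<and> y \<noteq> u" by blast
  then obtain nx where nx: "\<And>u v. v \<in> S \<Longrightarrow> nx u v \<in> S \<and> R v (nx u v) \<and> nx u v \<noteq> u"
    by metis
  obtain v0 v1 where v01: "v0 \<in> S" "v1 \<in> S" "R v0 v1"
    using \<open>S \<noteq> {}\<close> nx by blast
  define step where "step = (\<lambda>(u, v). (v, nx u v))"
  define w where "w k = fst ((step ^^ k) (v0, v1))" for k
  have w_Suc: "w (Suc k) = snd ((step ^^ k) (v0, v1))" for k
    unfolding w_def step_def by (simp add: case_prod_beta)
  have w_Suc_Suc: "w (Suc (Suc k)) = nx (w k) (w (Suc k))" for k
    unfolding w_Suc unfolding w_def step_def by (simp add: case_prod_beta)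
  have walk: "w k \<in> S \<and> w (Suc k) \<in> S \<and> R (w k) (w (Suc k))" for k
  proof (induction k)
    case 0 then show ?case using v01 by (simp add: w_def step_def)
  next
    case (Suc k) then show ?case using nx w_Suc_Suc by auto
  qed
  have "w (Suc (Suc k)) \<noteq> w k" for k using nx walk w_Suc_Suc by auto
  then show False using nonbacktracking_walk_has_cycle[of S R w, OF fin irrefl] walk acyclic by blast
qed

lemma card_edges_remove_le:
  assumes "finite S" and sym: "\<And>x y. R x y \<Longrightarrow> R y x"
  shows "card (edges R S) \<le> card (edges R (S - {v})) + 2 * card {y \<in> S. R v y}"
proof -
  let ?Nv = "{y \<in> S. R v y}"
  have "edges R S \<subseteq> edges R (S - {v}) \<union> ({v} \<times> ?Nv) \<union> (?Nv \<times> {v})"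
    unfolding edges_def using sym by auto
  then have "card (edges R S) \<le> card (edges R (S - {v}) \<union> ({v} \<times> ?Nv) \<union> (?Nv \<times> {v}))"
    by (rule card_mono[rotated]) (use assms(1) finite_edges in auto)
  also have "\<dots> \<le> card (edges R (S - {v})) + card ({v} \<times> ?Nv) + card (?Nv \<times> {v})"
    by (meson add_le_mono card_Un_le le_refl order_trans)
  finally show ?thesis by (simp add: card_cartesian_product)
qed

lemma card_edges_acyclic:
  assumes "finite S" "S \<noteq> {}" "\<And>x. \<not> R x x" "\<And>x y. R x y \<Longrightarrow> R y x"
    and "\<not> has_cycle_rel R S"
  shows "card (edges R S) + 2 \<le> 2 * card S"
  using assms
proof (induction "card S" arbitrary: S rule: less_induct)
  case less
  obtain v where v: "v \<in> S" "card {y \<in> S. R v y} \<le> 1"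
    using acyclic_has_leaf[of S R] less.prems by metis
  show ?case
  proof (cases "S = {v}")
    case True
    then have "edges R S = {}" using less.prems(3) by (auto simp: edges_def)
    then show ?thesis using True by simp
  next
    case False
    have "S - {v} \<noteq> {}" using False v(1) by auto
    moreover have "\<not> has_cycle_rel R (S - {v})"
      using less.prems(5) has_cycle_rel_mono[of R "S - {v}" S] by blast
    ultimately have "card (edges R (S - {v})) + 2 \<le> 2 * card (S - {v})"
      using less.prems(1,3,4) card_Diff1_less[OF less.prems(1) v(1)] by (intro less.hyps) auto
    moreover have "card (S - {v}) + 1 = card S"
      using card.remove[OF less.prems(1) v(1)] by simp
    moreover have "card (edges R S) \<le> card (edges R (S - {v})) + 2 * card {y \<in> S. R v y}"
      by (rule card_edges_remove_le) (use less.prems in auto)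
    ultimately show ?thesis using v(2) by linarith
  qed
qed

lemma acyclic_edges_connected:
  assumes fin: "finite S" and irrefl: "\<And>x. \<not> R x x" and sym: "\<And>x y. R x y \<Longrightarrow> R y x"
    and acyclic: "\<not> has_cycle_rel R S"
    and many_edges: "2 * card S \<le> card (edges R S) + 2"
    and "x \<in> S" "y \<in> S"
  shows "(\<lambda>a b. a \<in> S \<and> b \<in> S \<and> R a b)\<^sup>*\<^sup>* x y"
proof (rule ccontr)
  let ?R = "\<lambda>a b. a \<in> S \<and> b \<in> S \<and> R a b"
  assume not_reached: "\<not> ?R\<^sup>*\<^sup>* x y"
  define S1 where "S1 = {z \<in> S. ?R\<^sup>*\<^sup>* x z}"
  define S2 where "S2 = S - S1"
  have closed: "z \<in> S1 \<longleftrightarrow> z' \<in> S1" if "z \<in> S" "z' \<in> S" "R z z'" for z z'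
    using that sym unfolding S1_def by (auto intro: rtranclp.rtrancl_into_rtrancl)
  have "x \<in> S1" "y \<in> S2" using assms(6,7) not_reached unfolding S1_def S2_def by auto
  have fin12: "finite S1" "finite S2" using fin unfolding S1_def S2_def by auto
  have "card (edges R S1) + 2 \<le> 2 * card S1" "card (edges R S2) + 2 \<le> 2 * card S2"
    using card_edges_acyclic[of S1 R] card_edges_acyclic[of S2 R] fin12 irrefl sym
      has_cycle_rel_mono[of R S1 S] has_cycle_rel_mono[of R S2 S] acyclic \<open>x \<in> S1\<close> \<open>y \<in> S2\<close>
    unfolding S1_def S2_def by auto
  moreover have "card (edges R S) \<le> card (edges R S1) + card (edges R S2)"
  proof -
    have "edges R S \<subseteq> edges R S1 \<union> edges R S2" using closed unfolding edges_def S2_def by auto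
    then show ?thesis
      by (meson card_Un_le card_mono finite_UnI finite_edges fin12 order_trans)
  qed
  moreover have "card S = card S1 + card S2"
  proof -
    have "S = S1 \<union> S2" "S1 \<inter> S2 = {}" unfolding S1_def S2_def by auto
    then show ?thesis using card_Un_disjoint[OF fin12] by simp
  qed
  ultimately show False using many_edges by linarith
qed

lemma card_edges_pair_le:
  assumes "S \<subseteq> {p, q}" "R p q" "R q p"
  shows "2 * card S \<le> card (edges R S) + 2"
proof (cases "S = {p, q} \<and> p \<noteq> q")
  case True
  then have "{(p, q), (q, p)} \<subseteq> edges R S" using assms(2,3) unfolding edges_def by auto
  then have "2 \<le> card (edges R S)"
    using True card_mono[OF finite_edges, of S "{(p, q), (q, p)}" R] by auto
  then show ?thesis using True by simp
next
  case False
  then have "S \<subseteq> {p} \<or> S \<subseteq> {q}" using assms(1) by blast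
  then have "card S \<le> 1" using card_mono[of "{p}" S] card_mono[of "{q}" S] by auto
  then show ?thesis by simp
qed

lemma adj_sym: "adj p q \<Longrightarrow> adj q p"
  unfolding adj_def by (simp add: abs_minus_commute add.commute)

lemma adj_irrefl: "\<not> adj p p"
  unfolding adj_def by simp

lemma adj_cases:
  assumes "adj p q"
  shows "q = (fst p + 1, snd p) \<or> q = (fst p - 1, snd p) \<or> q = (fst p, snd p + 1) \<or> q = (fst p, snd p - 1)"
  using assms unfolding adj_def by (cases p; cases q) (auto simp: abs_if split: if_splits)

lemma adj_shift: "adj (x + fst p, y + snd p) (x + fst q, y + snd q) = adj p q"
  unfolding adj_def by (simp add: algebra_simps)

lemma adj_neighbours:
  "{q. adj p q} = {(fst p + 1, snd p), (fst p - 1, snd p), (fst p, snd p + 1), (fst p, snd p - 1)}"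
  using adj_cases[of p] by (auto simp: adj_def)

lemma card_adj_neighbours: "card {q. adj p q} = 4"
  unfolding adj_neighbours by simp

lemma finite_adj_neighbours: "finite {q. adj p q}"
  unfolding adj_neighbours by simp

lemma has_cycle_4:
  assumes "distinct [p1, p2, p3, p4]" "{p1, p2, p3, p4} \<subseteq> S"
    and "adj p1 p2" "adj p2 p3" "adj p3 p4" "adj p4 p1"
  shows "has_cycle S"
  unfolding has_cycle_def
proof (intro exI conjI)
  let ?xs = "[p1, p2, p3, p4]"
  show "\<forall>i < length ?xs - 1. adj (?xs ! i) (?xs ! Suc i)"
    using assms(3-5) by (auto simp: less_Suc_eq numeral_eq_Suc)
qed (use assms in auto)

lemma square_has_cycle:
  assumes "adj x y" "adj x z" "fst y \<noteq> fst z" "snd y \<noteq> snd z"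
    and "{x, y, z, (fst y + fst z - fst x, snd y + snd z - snd x)} \<subseteq> S"
  shows "has_cycle S"
proof -
  let ?c = "(fst y + fst z - fst x, snd y + snd z - snd x)"
  obtain a b where x: "x = (a, b)" by (cases x)
  have "y = (a + 1, b) \<or> y = (a - 1, b) \<or> y = (a, b + 1) \<or> y = (a, b - 1)"
    "z = (a + 1, b) \<or> z = (a - 1, b) \<or> z = (a, b + 1) \<or> z = (a, b - 1)"
    using adj_cases[OF assms(1)] adj_cases[OF assms(2)] x by simp_all
  then have "distinct [x, z, ?c, y] \<and> adj x z \<and> adj z ?c \<and> adj ?c y \<and> adj y x"
    using assms(3,4) by (elim disjE) (simp_all add: adj_def x)
  then show ?thesis using has_cycle_4[of x z ?c y S] assms(5) by auto
qed

definition box :: "nat \<Rightarrow> cell set" where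
  "box N = {0..int N - 1} \<times> {0..int N - 1}"

definition inner :: "nat \<Rightarrow> cell set" where
  "inner N = {1..int N - 2} \<times> {1..int N - 2}"

definition corners :: "nat \<Rightarrow> cell set" where
  "corners N = {(0, 0), (0, int N - 1), (int N - 1, 0), (int N - 1, int N - 1)}"

definition frame :: "nat \<Rightarrow> cell set" where
  "frame N = box N - inner N - corners N"

definition block :: "cell \<Rightarrow> cell set" where
  "block b = {b, (fst b, snd b + 1), (fst b + 1, snd b), (fst b + 1, snd b + 1)}"

definition blocks :: "nat \<Rightarrow> cell set" where
  "blocks N = {0..int N - 2} \<times> {0..int N - 2}"

definition diag :: "cell \<Rightarrow> cell \<Rightarrow> bool" where
  "diag p q \<longleftrightarrow> \<bar>fst p - fst q\<bar> = 1 \<and> \<bar>snd p - snd q\<bar> = 1"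

text \<open>The vertex \<^const>\<open>None\<close> represents the outside of the box.\<close>
definition diag_ext :: "nat \<Rightarrow> cell option \<Rightarrow> cell option \<Rightarrow> bool" where
  "diag_ext N x y = (case (x, y) of
      (Some p, Some q) \<Rightarrow> diag p q
    | (Some p, None) \<Rightarrow> p \<in> corners N
    | (None, Some q) \<Rightarrow> q \<in> corners N
    | (None, None) \<Rightarrow> False)"

lemma diag_ext_simps [simp]:
  "diag_ext N (Some p) (Some q) = diag p q"
  "diag_ext N (Some p) None = (p \<in> corners N)"
  "diag_ext N None (Some q) = (q \<in> corners N)"
  "\<not> diag_ext N None None"
  unfolding diag_ext_def by auto

lemma diag_sym: "diag p q \<Longrightarrow> diag q p"
  unfolding diag_def by auto

lemma diag_ext_sym: "diag_ext N x y \<Longrightarrow> diag_ext N y x"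
  by (cases x; cases y) (auto simp: diag_sym)

lemma diag_ext_irrefl: "\<not> diag_ext N x x"
  by (cases x) (auto simp: diag_def)

lemma diag_cases:
  assumes "diag p q"
  shows "(fst q = fst p - 1 \<or> fst q = fst p + 1) \<and> (snd q = snd p - 1 \<or> snd q = snd p + 1)"
  using assms unfolding diag_def by auto

lemma finite_box: "finite (box N)"
  unfolding box_def by simp

lemma card_box: "card (box N) = N * N"
  unfolding box_def by (simp add: card_cartesian_product)

lemma finite_inner: "finite (inner N)"
  unfolding inner_def by simp

lemma finite_corners: "finite (corners N)"
  unfolding corners_def by simp

lemma finite_blocks: "finite (blocks N)"
  unfolding blocks_def by simp

lemma diag_block:
  assumes "diag p q" "p \<in> block b" "q \<in> block b"
  shows "b = (min (fst p) (fst q), min (snd p) (snd q))"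
proof -
  have "fst p \<in> {fst b, fst b + 1}" "fst q \<in> {fst b, fst b + 1}"
    "snd p \<in> {snd b, snd b + 1}" "snd q \<in> {snd b, snd b + 1}"
    using assms(2,3) unfolding block_def by auto
  moreover have "fst p \<noteq> fst q" "snd p \<noteq> snd q" using assms(1) unfolding diag_def by auto
  ultimately show ?thesis by (cases b) auto
qed

section \<open>Crossing numbers of closed diagonal walks\<close>

text \<open>Put the exterior vertex far above the box.  Then \<open>crosses_up x y a b\<close> says that
  the edge from \<open>x\<close> to \<open>y\<close> leaves row \<open>a\<close> upwards, crossing the grid line above row
  \<open>a\<close> to the right of column \<open>b\<close>; \<open>crossings g a b\<close> counts the crossings of that
  half-line by the closed walk \<open>g\<close>.  Its parity is the parity of the winding number of
  \<open>g\<close> around the corner point at the top right of cell \<open>(a, b)\<close>.\<close>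
definition crosses_up :: "cell option \<Rightarrow> cell option \<Rightarrow> int \<Rightarrow> int \<Rightarrow> bool" where
  "crosses_up x y a b \<longleftrightarrow> (\<exists>s > b. x = Some (a, s) \<and>
     (y = Some (a - 1, s - 1) \<or> y = Some (a - 1, s + 1) \<or> (a = 0 \<and> y = None)))"

definition crosses_down :: "cell option \<Rightarrow> cell option \<Rightarrow> int \<Rightarrow> int \<Rightarrow> bool" where
  "crosses_down x y a b \<longleftrightarrow> (\<exists>s > b. x = Some (a, s) \<and>
     (y = Some (a + 1, s - 1) \<or> y = Some (a + 1, s + 1)))"

definition crossings :: "cell option list \<Rightarrow> int \<Rightarrow> int \<Rightarrow> nat" where
  "crossings g a b = (\<Sum>k < length g.
     of_bool (crosses_up (g ! k) (g ! (Suc k mod length g)) a b) +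
     of_bool (crosses_up (g ! (Suc k mod length g)) (g ! k) a b))"

lemma crosses_up_shift_right:
  "x \<noteq> Some (a, b + 1) \<Longrightarrow> crosses_up x y a b \<longleftrightarrow> crosses_up x y a (b + 1)"
  unfolding crosses_up_def by (smt (verit))

lemma crosses_up_Suc_row:
  assumes "0 \<le> a" "x \<noteq> Some (a + 1, b)" "y \<noteq> Some (a, b)"
  shows "crosses_up x y (a + 1) b \<longleftrightarrow> crosses_down y x a b"
  using assms unfolding crosses_up_def crosses_down_def by (smt (verit))

lemma crosses_up_down_diag_ext:
  assumes "diag_ext N x y" "a \<noteq> int N - 1"
  shows "of_bool (crosses_up x y a b) + of_bool (crosses_down x y a b)
       = (of_bool (\<exists>s > b. x = Some (a, s)) :: nat)"
proof (cases "\<exists>s > b. x = Some (a, s)")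
  case True
  then obtain s where s: "s > b" "x = Some (a, s)" by blast
  show ?thesis
  proof (cases y)
    case None
    then have "a = 0" using assms s by (auto simp: corners_def)
    then show ?thesis using s None unfolding crosses_up_def crosses_down_def by auto
  next
    case (Some q)
    then show ?thesis using diag_cases[of "(a, s)" q] assms(1) s
      unfolding crosses_up_def crosses_down_def by (cases q) auto
  qed
next
  case False
  then show ?thesis unfolding crosses_up_def crosses_down_def by auto
qed

lemma crosses_up_jump:
  assumes "1 \<le> a" "x \<noteq> Some (a, s + 1)"
  shows "of_bool (crosses_up x y a (s - 1)) = of_bool (crosses_up x y a (s + 1))
      + (of_bool (x = Some (a, s) \<and> (y = Some (a - 1, s - 1) \<or> y = Some (a - 1, s + 1))) :: nat)"
proof -
  have "crosses_up x y a (s - 1) \<longleftrightarrow>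
      crosses_up x y a (s + 1) \<or> (x = Some (a, s) \<and> (y = Some (a - 1, s - 1) \<or> y = Some (a - 1, s + 1)))"
    using assms unfolding crosses_up_def by (smt (verit))
  moreover have "\<not> (crosses_up x y a (s + 1) \<and> x = Some (a, s))"
    unfolding crosses_up_def by auto
  ultimately show ?thesis by auto
qed

lemma sum_Suc_mod:
  assumes "0 < m"
  shows "(\<Sum>k<m. f (Suc k mod m)) = (\<Sum>k<m. f k :: 'a :: comm_monoid_add)"
proof -
  obtain n where m: "m = Suc n" using assms gr0_implies_Suc by blast
  have "(\<Sum>k<Suc n. f (Suc k mod Suc n)) = (\<Sum>k<n. f (Suc k)) + f 0"
    by (simp add: sum.lessThan_Suc)
  also have "\<dots> = (\<Sum>k<Suc n. f k)"
    by (metis add.commute sum.lessThan_Suc_shift)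
  finally show ?thesis unfolding m .
qed

lemma cycle_closed_walk:
  assumes "\<forall>i < length xs - 1. R (xs ! i) (xs ! Suc i)" "R (last xs) (hd xs)" "k < length xs"
  shows "R (xs ! k) (xs ! (Suc k mod length xs))"
proof (cases "Suc k = length xs")
  case True
  moreover have "xs \<noteq> []" using assms(3) by auto
  ultimately have "xs ! k = last xs" "xs ! (Suc k mod length xs) = hd xs"
    by (auto simp: last_conv_nth hd_conv_nth simp flip: \<open>Suc k = length xs\<close>)
  then show ?thesis using assms(2) by simp
next
  case False
  then show ?thesis using assms(1,3) by simp
qed

section \<open>The gap graph is acyclic\<close>

locale framed_tree =
  fixes B :: "cell set" and N :: nat
  assumes odd_N: "odd N" and N_ge_5: "N \<ge> 5"
    and B_box: "B \<subseteq> box N"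
    and frame_B: "frame N \<subseteq> B"
    and connected_B: "connected_cells B"
    and acyclic_B: "\<not> has_cycle B"
    and gap_isolated: "\<And>p q. p \<in> inner N \<Longrightarrow> p \<notin> B \<Longrightarrow> adj p q \<Longrightarrow> q \<in> B"
    and many_gaps: "(N - 1) * (N - 1) \<le> 3 * card (inner N - B) + card (corners N - B)"
begin

definition gaps :: "cell set" where
  "gaps = box N - B"

definition gap_vertices :: "cell option set" where
  "gap_vertices = insert None (Some ` gaps)"

lemma four_le_N: "4 \<le> int N - 1"
  using N_ge_5 by simp

lemma gaps_subset: "gaps \<subseteq> inner N \<union> corners N"
  using frame_B unfolding gaps_def frame_def by blast

lemma gap_box: "p \<in> gaps \<Longrightarrow> p \<in> box N"
  unfolding gaps_def by simp

lemma gap_on_border_corner: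
  assumes "p \<in> gaps" "fst p \<in> {0, int N - 1} \<or> snd p \<in> {0, int N - 1}"
  shows "p \<in> corners N"
  using assms gaps_subset four_le_N unfolding inner_def by auto

lemma corner_diag_inner:
  assumes "c \<in> corners N" "diag c q" "q \<in> box N"
  shows "q \<in> inner N"
  using assms four_le_N unfolding corners_def diag_def box_def inner_def by auto

lemma corner_diag_unique:
  assumes "c1 \<in> corners N" "c2 \<in> corners N" "diag c1 q" "diag c2 q"
  shows "c1 = c2"
proof -
  have "\<bar>fst c1 - fst c2\<bar> \<le> 2" "\<bar>snd c1 - snd c2\<bar> \<le> 2"
    using assms(3,4) unfolding diag_def by auto
  then show ?thesis using assms(1,2) four_le_N unfolding corners_def by auto
qed

lemma inner_not_corner: "p \<in> inner N \<Longrightarrow> p \<notin> corners N"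
  using four_le_N unfolding inner_def corners_def by auto

end

locale closed_walk = framed_tree +
  fixes g :: "cell option list" and m :: nat
  assumes length_g: "length g = m" and m_pos: "0 < m"
    and walk_gap_vertices: "set g \<subseteq> gap_vertices"
    and walk_step: "\<And>k. k < m \<Longrightarrow> diag_ext N (g ! k) (g ! (Suc k mod m))"
begin

lemma nth_in_set: "k < m \<Longrightarrow> g ! k \<in> set g"
  using length_g by simp

lemma next_in_set: "g ! (Suc k mod m) \<in> set g"
  using nth_in_set m_pos by simp

lemma walk_avoids_B: "Some p \<in> set g \<Longrightarrow> p \<notin> B"
  using walk_gap_vertices unfolding gap_vertices_def gaps_def by auto

lemma walk_gaps: "Some p \<in> set g \<Longrightarrow> p \<in> gaps"
  using walk_gap_vertices unfolding gap_vertices_def by auto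

lemma crossings_right:
  assumes "(a, b + 1) \<in> B"
  shows "crossings g a b = crossings g a (b + 1)"
proof -
  have "crosses_up x y a b \<longleftrightarrow> crosses_up x y a (b + 1)" if "x \<in> set g" for x y
    using that assms walk_avoids_B crosses_up_shift_right by metis
  then show ?thesis
    unfolding crossings_def length_g using nth_in_set next_in_set by (intro sum.cong) auto
qed

lemma even_crossings_down:
  assumes "(a, b) \<in> B" "(a + 1, b) \<in> B"
  shows "even (crossings g a b + crossings g (a + 1) b)"
proof -
  have a: "0 \<le> a" "a \<noteq> int N - 1" using assms B_box unfolding box_def by auto
  let ?X = "\<lambda>x y. of_bool (crosses_up x y a b) + of_bool (crosses_down x y a b) :: nat"
  let ?f = "\<lambda>k. of_bool (\<exists>s > b. g ! k = Some (a, s)) :: nat"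
  have up_down: "crosses_up x y (a + 1) b \<longleftrightarrow> crosses_down y x a b" if "x \<in> set g" "y \<in> set g" for x y
    using that assms walk_avoids_B crosses_up_Suc_row[OF a(1)] by metis
  have "crossings g a b + crossings g (a + 1) b
      = (\<Sum>k<m. ?X (g ! k) (g ! (Suc k mod m)) + ?X (g ! (Suc k mod m)) (g ! k))"
    unfolding crossings_def length_g sum.distrib[symmetric]
    using up_down nth_in_set next_in_set by (intro sum.cong) auto
  also have "\<dots> = (\<Sum>k<m. ?f k + ?f (Suc k mod m))"
    using walk_step diag_ext_sym crosses_up_down_diag_ext[OF _ a(2)] by (intro sum.cong) auto
  also have "\<dots> = 2 * (\<Sum>k<m. ?f k)"
    by (simp only: sum.distrib sum_Suc_mod[OF m_pos, of ?f] mult_2)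
  finally show ?thesis by simp
qed

lemma crossings_parity_adj:
  assumes "adj_in B p q"
  shows "even (crossings g (fst p) (snd p)) \<longleftrightarrow> even (crossings g (fst q) (snd q))"
proof -
  have pq: "p \<in> B" "q \<in> B" "adj p q" using assms unfolding adj_in_def by auto
  consider "q = (fst p + 1, snd p)" | "p = (fst q + 1, snd q)" | "q = (fst p, snd p + 1)" | "p = (fst q, snd q + 1)"
    using adj_cases[OF pq(3)] by fastforce
  then show ?thesis
  proof cases
    case 1
    then show ?thesis using even_crossings_down[of "fst p" "snd p"] pq by auto
  next
    case 2
    then have "even (crossings g (fst q) (snd q) + crossings g (fst q + 1) (snd q))"
      using even_crossings_down[of "fst q" "snd q"] pq by simp
    then show ?thesis using 2 by simp
  next
    case 3
    then show ?thesis using crossings_right[of "fst p" "snd p"] pq by simp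
  next
    case 4
    then show ?thesis using crossings_right[of "fst q" "snd q"] pq by (metis fst_conv snd_conv)
  qed
qed

lemma crossings_parity_connected:
  assumes "(adj_in B)\<^sup>*\<^sup>* p q"
  shows "even (crossings g (fst p) (snd p)) \<longleftrightarrow> even (crossings g (fst q) (snd q))"
  using assms by (induction rule: rtranclp_induct) (auto dest: crossings_parity_adj)

lemma closed_walk_rotate: "closed_walk B N (rotate r g) m"
proof -
  have "diag_ext N (rotate r g ! k) (rotate r g ! (Suc k mod m))" if "k < m" for k
  proof -
    have "(r + Suc k mod m) mod m = Suc ((r + k) mod m) mod m"
      by (simp add: mod_simps)
    then show ?thesis
      using walk_step[of "(r + k) mod m"] that m_pos length_g by (simp add: nth_rotate)
  qed
  then show ?thesis
    using framed_tree_axioms length_g m_pos walk_gap_vertices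
    unfolding closed_walk_def closed_walk_axioms_def by simp
qed

end

locale gap_cycle = closed_walk +
  assumes distinct_g: "distinct g" and three_le_m: "3 \<le> m"
begin

lemma gap_cycle_rotate: "gap_cycle B N (rotate r g) m"
  using closed_walk_rotate distinct_g three_le_m
  unfolding gap_cycle_def gap_cycle_axioms_def by simp

lemma nth_eq_iff: "k < m \<Longrightarrow> l < m \<Longrightarrow> g ! k = g ! l \<longleftrightarrow> k = l"
  using distinct_g length_g by (simp add: nth_eq_iff_index_eq)

lemma crossings_across_inner_gap:
  assumes v: "g ! 1 = Some (a, s)" "(a, s) \<in> inner N"
    and p: "g ! 0 = Some p" and q: "g ! 2 = Some q" and rows: "fst p \<noteq> fst q"
  shows "crossings g a (s - 1) = crossings g a (s + 1) + 1"
proof -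
  have tile: "(a, s + 1) \<in> B"
    using gap_isolated[OF v(2)] walk_avoids_B nth_in_set[of 1] v(1) three_le_m
    unfolding adj_def by auto
  have a: "1 \<le> a" using v(2) unfolding inner_def by auto
  let ?near = "\<lambda>y. y = Some (a - 1, s - 1) \<or> y = Some (a - 1, s + 1)"
  let ?J = "\<lambda>x y. of_bool (x = Some (a, s) \<and> ?near y) :: nat"
  let ?U = "\<lambda>x y t. of_bool (crosses_up x y a t) + of_bool (crosses_up y x a t) :: nat"
  have jump: "?U x y (s - 1) = ?U x y (s + 1) + (?J x y + ?J y x)" if "x \<in> set g" "y \<in> set g" for x y
  proof -
    have "x \<noteq> Some (a, s + 1)" "y \<noteq> Some (a, s + 1)" using that walk_avoids_B tile by auto
    then show ?thesis using crosses_up_jump[OF a, of x s y] crosses_up_jump[OF a, of y s x] by simp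
  qed
  have "crossings g a (s - 1) = (\<Sum>k<m. ?U (g ! k) (g ! (Suc k mod m)) (s + 1)
      + (?J (g ! k) (g ! (Suc k mod m)) + ?J (g ! (Suc k mod m)) (g ! k)))"
    unfolding crossings_def length_g using jump nth_in_set next_in_set by (intro sum.cong) auto
  also have "\<dots> = crossings g a (s + 1) + (\<Sum>k<m. ?J (g ! k) (g ! (Suc k mod m)))
      + (\<Sum>k<m. ?J (g ! (Suc k mod m)) (g ! k))"
    unfolding crossings_def length_g sum.distrib by simp
  finally have split: "crossings g a (s - 1) = crossings g a (s + 1)
      + (\<Sum>k<m. ?J (g ! k) (g ! (Suc k mod m))) + (\<Sum>k<m. ?J (g ! (Suc k mod m)) (g ! k))" .
  have "?J (g ! k) (g ! (Suc k mod m)) = (if k = 1 then of_bool (?near (g ! 2)) else 0)" if "k < m" for k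
    using nth_eq_iff[OF that, of 1] three_le_m v(1) by (auto simp: numeral_2_eq_2)
  then have J1: "(\<Sum>k<m. ?J (g ! k) (g ! (Suc k mod m))) = of_bool (?near (g ! 2))"
    using three_le_m by simp
  have "?J (g ! (Suc k mod m)) (g ! k) = (if k = 0 then of_bool (?near (g ! 0)) else 0)" if "k < m" for k
  proof -
    have "Suc k mod m = 1 \<longleftrightarrow> k = 0" using that three_le_m by (cases "Suc k = m") auto
    then show ?thesis using nth_eq_iff[of "Suc k mod m" 1] m_pos three_le_m v(1) by auto
  qed
  then have J0: "(\<Sum>k<m. ?J (g ! (Suc k mod m)) (g ! k)) = of_bool (?near (g ! 0))"
    using three_le_m by simp
  have "diag (a, s) p" "diag (a, s) q"
    using walk_step[of 0] walk_step[of 1] three_le_m v(1) p q diag_sym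
    by (auto simp: numeral_2_eq_2)
  then have "of_bool (?near (g ! 2)) + of_bool (?near (g ! 0)) = (1::nat)"
    using p q rows diag_cases[of "(a, s)" p] diag_cases[of "(a, s)" q] by (cases p; cases q) auto
  then show ?thesis using split J0 J1 by simp
qed

lemma inner_gap_neighbours_same_row:
  assumes v: "g ! 1 = Some (a, s)" "(a, s) \<in> inner N"
    and p: "g ! 0 = Some p" and q: "g ! 2 = Some q"
  shows "fst p = fst q"
proof (rule ccontr)
  assume "fst p \<noteq> fst q"
  then have "crossings g a (s - 1) = crossings g a (s + 1) + 1"
    using crossings_across_inner_gap[OF v p q] by simp
  moreover have "(a, s - 1) \<in> B" "(a, s + 1) \<in> B"
    using gap_isolated[OF v(2)] walk_avoids_B nth_in_set[of 1] v(1) three_le_m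
    unfolding adj_def by auto
  then have "(adj_in B)\<^sup>*\<^sup>* (a, s - 1) (a, s + 1)"
    using connected_B unfolding connected_cells_def by blast
  ultimately show False using crossings_parity_connected by fastforce
qed

lemma rightmost_not_second:
  assumes p: "g ! 0 = Some p" and v: "g ! 1 = Some v" and q: "g ! 2 = Some q"
  shows "snd v < snd p \<or> snd v < snd q"
proof (rule ccontr)
  assume "\<not> (snd v < snd p \<or> snd v < snd q)"
  have in_set: "Some p \<in> set g" "Some v \<in> set g" "Some q \<in> set g"
    using nth_in_set[of 0] nth_in_set[of 1] nth_in_set[of 2] p v q three_le_m by auto
  have dp: "diag v p" and dq: "diag v q"
    using walk_step[of 0] walk_step[of 1] p v q three_le_m diag_sym by (auto simp: numeral_2_eq_2)
  have rows: "fst p \<in> {fst v - 1, fst v + 1}" "fst q \<in> {fst v - 1, fst v + 1}"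
    and cols: "snd p = snd v - 1" "snd q = snd v - 1"
    using diag_cases[OF dp] diag_cases[OF dq] \<open>\<not> (snd v < snd p \<or> snd v < snd q)\<close> by auto
  have "p \<noteq> q" using nth_eq_iff[of 0 2] p q three_le_m by auto
  then have "fst p \<noteq> fst q" using cols by (simp add: prod_eq_iff)
  moreover have "v \<in> inner N"
  proof -
    have "p \<in> box N" "q \<in> box N" using gap_box walk_gaps in_set by auto
    then have "fst p \<in> {0..int N - 1}" "fst q \<in> {0..int N - 1}"
      unfolding box_def by (auto simp: mem_Times_iff)
    then have "fst v \<noteq> 0" "fst v \<noteq> int N - 1" using rows \<open>fst p \<noteq> fst q\<close> by auto
    then have "v \<notin> corners N" unfolding corners_def by auto
    moreover have "v \<in> gaps" using walk_gaps in_set by simp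
    ultimately show ?thesis using gaps_subset by blast
  qed
  ultimately show False using inner_gap_neighbours_same_row[of "fst v" "snd v"] p v q by simp
qed

lemma exterior_not_last: "g ! (m - 1) \<noteq> None"
proof
  assume last: "g ! (m - 1) = None"
  have idx: "Suc (m - 1) mod m = 0" "Suc (m - 2) mod m = m - 1" "Suc 0 mod m = 1" "Suc 1 mod m = 2"
    using three_le_m by auto
  have in_set: "g ! i \<in> set g" if "i \<le> 2" for i
    using nth_in_set that three_le_m by simp
  obtain c where c: "g ! 0 = Some c" "c \<in> corners N"
    using walk_step[of "m - 1"] last idx m_pos by (cases "g ! 0") auto
  have "g ! 1 \<noteq> None" using nth_eq_iff[of 1 "m - 1"] last three_le_m by auto
  then obtain q where q: "g ! 1 = Some q" by auto
  have cq: "diag c q" using walk_step[of 0] c q idx m_pos by simp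
  have q_inner: "q \<in> inner N"
    using corner_diag_inner[OF c(2) cq] gap_box walk_gaps in_set[of 1] q by simp
  obtain c' where "g ! (m - 2) = Some c'" "c' \<in> corners N"
    using walk_step[of "m - 2"] last idx three_le_m by (cases "g ! (m - 2)") auto
  then have "m - 2 \<noteq> 1" using q inner_not_corner[OF q_inner] by auto
  then have "g ! 2 \<noteq> None" using nth_eq_iff[of 2 "m - 1"] last three_le_m by auto
  then obtain u where u: "g ! 2 = Some u" by auto
  have qu: "diag q u" using walk_step[of 1] q u idx three_le_m by (simp add: numeral_2_eq_2)
  have "u \<noteq> c" using nth_eq_iff[of 2 0] u c three_le_m by auto
  have "fst u \<notin> {0, int N - 1}"
  proof
    assume "fst u \<in> {0, int N - 1}"
    moreover have "u \<in> gaps" using walk_gaps in_set[of 2] u by simp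
    ultimately have "u \<in> corners N" using gap_on_border_corner by blast
    then show False using corner_diag_unique[OF _ c(2) diag_sym[OF qu] cq] \<open>u \<noteq> c\<close> by blast
  qed
  moreover have "fst c = fst u"
    using inner_gap_neighbours_same_row[of "fst q" "snd q"] q q_inner c(1) u by simp
  ultimately show False using c(2) unfolding corners_def by auto
qed

lemma exterior_on_cycle: "None \<in> set g"
proof (rule ccontr)
  assume no_exterior: "None \<notin> set g"
  let ?P = "Option.these (set g)"
  have "finite ?P" by (simp add: Option.these_def)
  moreover have "?P \<noteq> {}"
    using no_exterior nth_in_set[of 0] m_pos by (metis empty_iff in_these_eq not_None_eq)
  ultimately have "Max (snd ` ?P) \<in> snd ` ?P" by (intro Max_in) auto
  then obtain v where v: "v \<in> ?P" "snd v = Max (snd ` ?P)" by auto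
  have rightmost: "snd p \<le> snd v" if "Some p \<in> set g" for p
    using that v(2) \<open>finite ?P\<close> by (simp add: in_these_eq)
  obtain k where k: "k < m" "g ! k = Some v"
    using v(1) length_g by (metis in_set_conv_nth in_these_eq)
  define r where "r = k + m - 1"
  interpret R: gap_cycle B N "rotate r g" m by (rule gap_cycle_rotate)
  have R_in_set: "rotate r g ! i \<in> set g" if "i < m" for i
    using that length_g R.nth_in_set by simp
  have "(r + 1) mod m = k" using k m_pos unfolding r_def by simp
  then have v1: "rotate r g ! 1 = Some v" using k three_le_m length_g by (simp add: nth_rotate)
  have "0 < m" "2 < m" using three_le_m by auto
  then have "rotate r g ! 0 \<noteq> None" "rotate r g ! 2 \<noteq> None"
    using R_in_set no_exterior by metis+
  then obtain p q where p: "rotate r g ! 0 = Some p" and q: "rotate r g ! 2 = Some q" by auto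
  have "Some p \<in> set g" "Some q \<in> set g"
    using R_in_set \<open>0 < m\<close> \<open>2 < m\<close> p q by metis+
  then show False using R.rightmost_not_second[OF p v1 q] rightmost by fastforce
qed

end

lemma (in framed_tree) gap_graph_acyclic: "\<not> has_cycle_rel (diag_ext N) gap_vertices"
proof
  assume "has_cycle_rel (diag_ext N) gap_vertices"
  then obtain xs where xs: "length xs \<ge> 3" "distinct xs" "set xs \<subseteq> gap_vertices"
      "\<forall>i < length xs - 1. diag_ext N (xs ! i) (xs ! Suc i)" "diag_ext N (last xs) (hd xs)"
    unfolding has_cycle_rel_def by blast
  interpret C: gap_cycle B N xs "length xs"
    using xs cycle_closed_walk[of xs "diag_ext N"] by unfold_locales auto
  obtain k where k: "k < length xs" "xs ! k = None"
    using C.exterior_on_cycle by (metis in_set_conv_nth)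
  interpret R: gap_cycle B N "rotate (Suc k) xs" "length xs" by (rule C.gap_cycle_rotate)
  have "rotate (Suc k) xs ! (length xs - 1) = xs ! ((Suc k + (length xs - 1)) mod length xs)"
    using k(1) by (intro nth_rotate) simp
  also have "Suc k + (length xs - 1) = k + length xs" using k(1) by simp
  finally have "rotate (Suc k) xs ! (length xs - 1) = None" using k by simp
  then show False using R.exterior_not_last by simp
qed

section \<open>Connectivity and parity of the gap graph\<close>

context framed_tree
begin

lemma finite_gaps: "finite gaps"
  unfolding gaps_def box_def by simp

lemma gaps_eq: "gaps = (inner N - B) \<union> (corners N - B)"
proof -
  have "inner N \<subseteq> box N" "corners N \<subseteq> box N"
    using four_le_N unfolding inner_def corners_def box_def by auto
  then show ?thesis using gaps_subset unfolding gaps_def by blast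
qed

lemma card_gaps: "card gaps = card (inner N - B) + card (corners N - B)"
  unfolding gaps_eq using inner_not_corner by (intro card_Un_disjoint) (auto simp: inner_def corners_def)

lemma gaps_not_adj:
  assumes "p \<in> gaps" "q \<in> gaps"
  shows "\<not> adj p q"
proof
  assume pq: "adj p q"
  have "p \<notin> inner N" "q \<notin> inner N"
    using gap_isolated pq adj_sym assms unfolding gaps_def by blast+
  then have "p \<in> corners N" "q \<in> corners N" using assms gaps_subset by auto
  then show False using pq four_le_N unfolding corners_def adj_def by auto
qed

lemma card_block_gaps: "2 * card (gaps \<inter> block b) \<le> card (edges diag (gaps \<inter> block b)) + 2"
proof -
  obtain x y where b: "b = (x, y)" by (cases b)
  have "adj (x, y) (x, y + 1)" "adj (x, y) (x + 1, y)" "adj (x + 1, y + 1) (x, y + 1)" "adj (x + 1, y + 1) (x + 1, y)"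
    unfolding adj_def by auto
  then have "gaps \<inter> block b \<subseteq> {(x, y), (x + 1, y + 1)} \<or> gaps \<inter> block b \<subseteq> {(x, y + 1), (x + 1, y)}"
    using gaps_not_adj b unfolding block_def by auto
  then show ?thesis
    using card_edges_pair_le[of "gaps \<inter> block b" "(x, y)" "(x + 1, y + 1)" diag]
      card_edges_pair_le[of "gaps \<inter> block b" "(x, y + 1)" "(x + 1, y)" diag]
    by (auto simp: diag_def)
qed

lemma sum_card_block_edges: "(\<Sum>b\<in>blocks N. card (edges diag (gaps \<inter> block b))) \<le> card (edges diag gaps)"
proof -
  have "edges diag (gaps \<inter> block b) \<inter> edges diag (gaps \<inter> block b') = {}" if "b \<noteq> b'" for b b'
    using that diag_block unfolding edges_def by blast
  then have "(\<Sum>b\<in>blocks N. card (edges diag (gaps \<inter> block b))) = card (\<Union>b\<in>blocks N. edges diag (gaps \<inter> block b))"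
    using finite_gaps by (intro card_UN_disjoint[symmetric] finite_blocks) (auto simp: finite_edges)
  also have "\<dots> \<le> card (edges diag gaps)"
    using finite_gaps by (intro card_mono finite_edges) (auto simp: edges_def)
  finally show ?thesis .
qed

lemma card_blocks_containing:
  assumes "p \<in> gaps"
  shows "(if p \<in> inner N then 4 else 1) \<le> card {b \<in> blocks N. p \<in> block b}"
proof -
  obtain i j where p: "p = (i, j)" by (cases p)
  have fin: "finite {b \<in> blocks N. p \<in> block b}" unfolding blocks_def by simp
  show ?thesis
  proof (cases "p \<in> inner N")
    case True
    then have "{(i - 1, j - 1), (i - 1, j), (i, j - 1), (i, j)} \<subseteq> {b \<in> blocks N. p \<in> block b}"
      using p unfolding inner_def blocks_def block_def by auto
    from card_mono[OF fin this] show ?thesis using True by simp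
  next
    case False
    then have "p \<in> corners N" using assms gaps_subset by auto
    then have "(min i (int N - 2), min j (int N - 2)) \<in> {b \<in> blocks N. p \<in> block b}"
      using p four_le_N unfolding corners_def blocks_def block_def by auto
    then have "1 \<le> card {b \<in> blocks N. p \<in> block b}"
      using fin card_0_eq by (metis One_nat_def Suc_leI empty_iff gr0I)
    then show ?thesis using False by simp
  qed
qed

lemma sum_card_block_gaps:
  "4 * card (inner N - B) + card (corners N - B) \<le> (\<Sum>b\<in>blocks N. card (gaps \<inter> block b))"
proof -
  let ?f = "\<lambda>p. if p \<in> inner N then 4 else 1 :: nat"
  have "(\<Sum>p\<in>inner N - B. ?f p) = (\<Sum>p\<in>inner N - B. 4)" by (intro sum.cong) auto
  moreover have "(\<Sum>p\<in>corners N - B. ?f p) = (\<Sum>p\<in>corners N - B. 1)"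
    using inner_not_corner by (intro sum.cong) auto
  moreover have "(\<Sum>p\<in>gaps. ?f p) = (\<Sum>p\<in>inner N - B. ?f p) + (\<Sum>p\<in>corners N - B. ?f p)"
    unfolding gaps_eq using inner_not_corner finite_inner finite_corners
    by (intro sum.union_disjoint) auto
  ultimately have "4 * card (inner N - B) + card (corners N - B) = (\<Sum>p\<in>gaps. ?f p)"
    by simp
  also have "\<dots> \<le> (\<Sum>p\<in>gaps. card {b \<in> blocks N. p \<in> block b})"
    by (intro sum_mono card_blocks_containing)
  also have "\<dots> = (\<Sum>b\<in>blocks N. card {p \<in> gaps. p \<in> block b})"
    unfolding card_eq_sum by (rule sum.swap_restrict[OF finite_gaps finite_blocks])
  also have "\<dots> = (\<Sum>b\<in>blocks N. card (gaps \<inter> block b))"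
    by (simp only: Int_def)
  finally show ?thesis .
qed

lemma card_gap_diag_edges: "2 * card (inner N - B) \<le> card (edges diag gaps)"
proof -
  have "card (blocks N) = (N - 1) * (N - 1)"
    using N_ge_5 unfolding blocks_def by (simp add: card_cartesian_product nat_diff_distrib)
  moreover have "(\<Sum>b\<in>blocks N. 2 * card (gaps \<inter> block b)) \<le> (\<Sum>b\<in>blocks N. card (edges diag (gaps \<inter> block b)) + 2)"
    by (intro sum_mono card_block_gaps)
  then have "2 * (\<Sum>b\<in>blocks N. card (gaps \<inter> block b))
      \<le> (\<Sum>b\<in>blocks N. card (edges diag (gaps \<inter> block b))) + 2 * card (blocks N)"
    by (simp only: sum.distrib sum_distrib_left[symmetric] sum_constant) simp
  ultimately show ?thesis
    using sum_card_block_edges sum_card_block_gaps many_gaps by linarith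
qed

lemma gap_graph_edges: "2 * card gap_vertices \<le> card (edges (diag_ext N) gap_vertices) + 2"
proof -
  let ?C = "corners N - B"
  let ?E1 = "(\<lambda>(p, q). (Some p, Some q)) ` edges diag gaps"
  let ?E2 = "Pair (None :: cell option) ` Some ` ?C" and ?E3 = "(\<lambda>c. (c, None :: cell option)) ` Some ` ?C"
  have C: "?C \<subseteq> gaps" "finite ?C" unfolding gaps_eq corners_def by auto
  have "card ?E1 = card (edges diag gaps)" by (intro card_image) (auto simp: inj_on_def)
  moreover have "card ?E2 = card ?C" "card ?E3 = card ?C" by (simp_all add: card_image inj_on_def)
  ultimately have "card (edges diag gaps) + 2 * card ?C = card ?E1 + card ?E2 + card ?E3"
    by linarith
  also have "\<dots> = card (?E1 \<union> ?E2 \<union> ?E3)"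
    using C finite_gaps by (subst card_Un_disjoint; auto simp: finite_edges)+
  also have "\<dots> \<le> card (edges (diag_ext N) gap_vertices)"
    using C finite_gaps unfolding gap_vertices_def
    by (intro card_mono finite_edges) (auto simp: edges_def)
  finally have "card (edges diag gaps) + 2 * card ?C \<le> card (edges (diag_ext N) gap_vertices)" .
  moreover have "card gap_vertices = card gaps + 1"
    unfolding gap_vertices_def using finite_gaps by (simp add: card_image)
  ultimately show ?thesis using card_gap_diag_edges card_gaps by simp
qed

lemma gap_reachable:
  assumes "p \<in> gaps"
  shows "(\<lambda>x y. x \<in> gap_vertices \<and> y \<in> gap_vertices \<and> diag_ext N x y)\<^sup>*\<^sup>* None (Some p)"
  using assms finite_gaps diag_ext_irrefl diag_ext_sym gap_graph_acyclic gap_graph_edges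
  by (intro acyclic_edges_connected) (auto simp: gap_vertices_def)

lemma gap_even:
  assumes "p \<in> gaps"
  shows "even (fst p + snd p)"
proof -
  have "even (fst c + snd c)"
    if "(\<lambda>x y. x \<in> gap_vertices \<and> y \<in> gap_vertices \<and> diag_ext N x y)\<^sup>*\<^sup>* None x" "x = Some c" for x c
    using that
  proof (induction arbitrary: c rule: rtranclp_induct)
    case (step y z)
    show ?case
    proof (cases y)
      case None
      have "even (int N - 1)" using odd_N by simp
      then show ?thesis using step None by (auto simp: corners_def)
    next
      case (Some q)
      then have "diag q c" "even (fst q + snd q)" using step by auto
      then show ?thesis using diag_cases by fastforce
    qed
  qed simp
  then show ?thesis using gap_reachable[OF assms] by blast
qed

lemma odd_cell_tile: "p \<in> box N \<Longrightarrow> odd (fst p + snd p) \<Longrightarrow> p \<in> B"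
  using gap_even unfolding gaps_def by blast

lemma tile_beside_odd_odd:
  assumes "x \<in> B" "y \<in> B" "z \<in> B" "adj x y" "adj x z" "odd (fst z)" "odd (snd z)"
  shows "odd (fst y) \<or> odd (snd y)"
proof (rule ccontr)
  assume "\<not> (odd (fst y) \<or> odd (snd y))"
  then have ev: "even (fst y)" "even (snd y)" by auto
  let ?c = "(fst y + fst z - fst x, snd y + snd z - snd x)"
  have ne: "fst y \<noteq> fst z" "snd y \<noteq> snd z" using ev assms(6,7) by auto
  have "fst ?c \<in> {fst y, fst z}" "snd ?c \<in> {snd y, snd z}"
    using adj_cases[OF assms(4)] adj_cases[OF assms(5)] ne by auto
  then have "?c \<in> box N" using assms(2,3) B_box unfolding box_def by auto
  moreover have "odd (fst ?c + snd ?c)"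
    using adj_cases[OF assms(4)] ev assms(6,7) by auto
  ultimately have "?c \<in> B" by (rule odd_cell_tile)
  then have "has_cycle B" using square_has_cycle[OF assms(4,5) ne] assms(1-3) by auto
  then show False using acyclic_B by simp
qed

lemma odd_odd_not_tile:
  assumes "odd (fst p)" "odd (snd p)"
  shows "p \<notin> B"
proof
  assume "p \<in> B"
  define P where "P x \<longleftrightarrow> (odd (fst x) \<and> odd (snd x)) \<or>
      (odd (fst x + snd x) \<and> (\<exists>z. adj x z \<and> z \<in> B \<and> odd (fst z) \<and> odd (snd z)))" for x
  have "P y" if "(adj_in B)\<^sup>*\<^sup>* p y" for y
    using that
  proof (induction rule: rtranclp_induct)
    case base then show ?case using assms unfolding P_def by simp
  next
    case (step x y)
    have xy: "x \<in> B" "y \<in> B" "adj x y" using step(2) unfolding adj_in_def by auto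
    have parity: "odd (fst x + snd x) \<longleftrightarrow> even (fst y + snd y)"
      using adj_cases[OF xy(3)] by auto
    from step.IH consider "odd (fst x)" "odd (snd x)"
      | z where "odd (fst x + snd x)" "adj x z" "z \<in> B" "odd (fst z)" "odd (snd z)"
      unfolding P_def by blast
    then show ?case
    proof cases
      case 1
      then have "odd (fst y + snd y)" using parity by presburger
      then show ?thesis using xy adj_sym[OF xy(3)] 1 unfolding P_def by blast
    next
      case 2
      then have "odd (fst y) \<or> odd (snd y)" "even (fst y + snd y)"
        using tile_beside_odd_odd[OF xy(1,2) 2(3) xy(3) 2(2,4,5)] parity by auto
      then show ?thesis unfolding P_def by presburger
    qed
  qed
  moreover have "(0, 2) \<in> B"
    using frame_B four_le_N unfolding frame_def box_def inner_def corners_def by auto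
  ultimately have "P (0, 2)" using connected_B \<open>p \<in> B\<close> unfolding connected_cells_def by blast
  then show False unfolding P_def by simp
qed

end

section \<open>Efficiently structured polyominoes with square interior\<close>

locale square_polyomino =
  fixes A :: "cell set" and N :: nat and x0 y0 :: int
  assumes odd_N: "odd N" and N_ge_5: "N \<ge> 5"
    and efficient: "efficiently_structured A"
    and square: "square_interior A N x0 y0"
begin

definition shift :: "cell \<Rightarrow> cell" where
  "shift p = (x0 + fst p, y0 + snd p)"

definition unshift :: "cell \<Rightarrow> cell" where
  "unshift p = (fst p - x0, snd p - y0)"

definition A0 :: "cell set" where
  "A0 = {p. shift p \<in> A}"

definition hole_cells :: "cell set" where
  "hole_cells = {u. {u} \<in> holes A}"

lemma shift_unshift [simp]: "shift (unshift p) = p" and unshift_shift [simp]: "unshift (shift p) = p"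
  unfolding shift_def unshift_def by simp_all

lemma inj_shift: "inj shift"
  by (metis injI unshift_shift)

lemma adj_shift_iff [simp]: "adj (shift p) (shift q) = adj p q"
  unfolding shift_def by (rule adj_shift)

lemma adj_unshift_iff [simp]: "adj (unshift p) (unshift q) = adj p q"
  by (metis adj_shift_iff shift_unshift)

lemma mem_A0: "p \<in> A0 \<longleftrightarrow> shift p \<in> A"
  unfolding A0_def by simp

lemma A_eq: "A = shift ` A0"
  unfolding A0_def by (auto intro: image_eqI[of _ shift, OF shift_unshift[symmetric]])

lemma card_A0: "card A0 = card A"
proof -
  have "card (shift ` A0) = card A0" by (intro card_image inj_on_subset[OF inj_shift]) simp
  then show ?thesis by (metis A_eq)
qed

lemma finite_A: "finite A" and connected_A: "connected_cells A" and acyclic_A: "\<not> has_cycle A"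
  and hole_card: "H \<in> holes A \<Longrightarrow> card H = 1"
  and outer_boundary_eq: "card (outer_boundary A) = 2 * nat \<lceil>2 * sqrt (real (card A + card (holes A)))\<rceil>"
  using efficient unfolding efficiently_structured_def polyomino_def acyclic_poly_def by auto

lemma four_le_N: "4 \<le> int N - 1"
  using N_ge_5 by simp

lemma finite_A0: "finite A0"
  using finite_A A_eq finite_imageD inj_on_subset[OF inj_shift subset_UNIV] by metis

lemma A0_box: "A0 \<subseteq> box N"
  using square unfolding square_interior_def A0_def shift_def box_def by auto

lemma frame_A0: "frame N \<subseteq> A0"
proof
  fix p assume p: "p \<in> frame N"
  obtain i j where ij: "p = (i, j)" by (cases p)
  have box: "0 \<le> i" "i \<le> int N - 1" "0 \<le> j" "j \<le> int N - 1"
    and not_inner: "\<not> (1 \<le> i \<and> i \<le> int N - 2 \<and> 1 \<le> j \<and> j \<le> int N - 2)"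
    and not_corner: "(i, j) \<notin> corners N"
    using p ij unfolding frame_def box_def inner_def by auto
  have "i = 0 \<or> i = int N - 1 \<or> j = 0 \<or> j = int N - 1" using box not_inner by linarith
  moreover have "\<not> ((i = 0 \<or> i = int N - 1) \<and> (j = 0 \<or> j = int N - 1))"
    using not_corner unfolding corners_def by auto
  ultimately have "(x0 + i, y0 + j) \<in> A"
    using box by (intro square[unfolded square_interior_def, THEN conjunct2, rule_format]) simp
  then show "p \<in> A0" unfolding mem_A0 shift_def ij by simp
qed

lemma connected_A0: "connected_cells A0"
proof -
  have "(adj_in A0)\<^sup>*\<^sup>* (unshift u) (unshift v)" if "(adj_in A)\<^sup>*\<^sup>* u v" for u v
    using that
  proof (induction rule: rtranclp_induct)
    case (step y z)
    then have "adj_in A0 (unshift y) (unshift z)" unfolding adj_in_def by (simp add: mem_A0)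
    with step.IH show ?case by (rule rtranclp.rtrancl_into_rtrancl)
  qed simp
  moreover have "(adj_in A)\<^sup>*\<^sup>* (shift p) (shift q)" if "p \<in> A0" "q \<in> A0" for p q
    using that connected_A unfolding connected_cells_def mem_A0 by blast
  ultimately show ?thesis unfolding connected_cells_def by (metis unshift_shift)
qed

lemma acyclic_A0: "\<not> has_cycle A0"
proof
  assume "has_cycle A0"
  then obtain xs where xs: "length xs \<ge> 3" "distinct xs" "set xs \<subseteq> A0"
      "\<forall>i < length xs - 1. adj (xs ! i) (xs ! Suc i)" "adj (last xs) (hd xs)"
    unfolding has_cycle_def by blast
  have "xs \<noteq> []" using xs(1) by auto
  then have "has_cycle A"
    unfolding has_cycle_def using xs
    by (intro exI[of _ "map shift xs"])
      (auto simp: distinct_map inj_on_subset[OF inj_shift] mem_A0 last_map hd_map)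
  then show False using acyclic_A by simp
qed

lemma component_stays_inner:
  assumes "unshift u \<in> inner N" "(adj_in (- A))\<^sup>*\<^sup>* u v"
  shows "unshift v \<in> inner N"
  using assms(2)
proof (induction rule: rtranclp_induct)
  case base then show ?case using assms(1) .
next
  case (step y z)
  have z: "z \<notin> A" "adj (unshift y) (unshift z)" using step(2) unfolding adj_in_def by auto
  then have "unshift z \<in> box N" "unshift z \<notin> corners N"
    using step.IH adj_cases[OF z(2)] four_le_N unfolding inner_def box_def corners_def by auto
  moreover have "unshift z \<notin> A0" using z(1) by (simp add: mem_A0)
  ultimately show ?case using frame_A0 unfolding frame_def by blast
qed

lemma inner_gap_hole:
  assumes "unshift u \<in> inner N" "u \<notin> A"
  shows "comp_of (- A) u = {u}" "{u} \<in> holes A"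
proof -
  have "comp_of (- A) u \<subseteq> shift ` inner N"
    using component_stays_inner[OF assms(1)] unfolding comp_of_def
    by (auto intro: image_eqI[of _ shift, OF shift_unshift[symmetric]])
  then have "finite (comp_of (- A) u)" using finite_inner finite_subset by blast
  then have hole: "comp_of (- A) u \<in> holes A" using assms(2) unfolding holes_def by blast
  moreover have "u \<in> comp_of (- A) u" unfolding comp_of_def by simp
  ultimately show "comp_of (- A) u = {u}" using hole_card by (metis card_1_singletonE singletonD)
  with hole show "{u} \<in> holes A" by simp
qed

lemma gap_isolated:
  assumes "p \<in> inner N" "p \<notin> A0" "adj p q"
  shows "q \<in> A0"
proof (rule ccontr)
  assume "q \<notin> A0"
  then have "adj_in (- A) (shift p) (shift q)" using assms(2,3) unfolding adj_in_def by (simp add: mem_A0)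
  then have "shift q \<in> comp_of (- A) (shift p)" unfolding comp_of_def by simp
  moreover have "comp_of (- A) (shift p) = {shift p}"
    using inner_gap_hole(1)[of "shift p"] assms(1,2) by (simp add: mem_A0)
  ultimately have "q = p" by (metis singletonD unshift_shift)
  then show False using assms(3) adj_irrefl by simp
qed

lemma hole_cell_neighbours:
  assumes "u \<in> hole_cells"
  shows "u \<notin> A" "adj u t \<Longrightarrow> t \<in> A"
proof -
  obtain p where p: "p \<notin> A" "{u} = comp_of (- A) p"
    using assms unfolding hole_cells_def holes_def by blast
  moreover have "p \<in> comp_of (- A) p" unfolding comp_of_def by simp
  ultimately show "u \<notin> A" by auto
  show "t \<in> A" if "adj u t"
  proof (rule ccontr)
    assume "t \<notin> A"
    have "(adj_in (- A))\<^sup>*\<^sup>* p u" using p(2) unfolding comp_of_def by blast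
    moreover have "adj_in (- A) u t" using that \<open>t \<notin> A\<close> \<open>u \<notin> A\<close> unfolding adj_in_def by simp
    ultimately have "t \<in> comp_of (- A) p" unfolding comp_of_def by (simp add: rtranclp.rtrancl_into_rtrancl)
    then have "t = u" using p(2) by auto
    then show False using that adj_irrefl by simp
  qed
qed

lemma hole_cell_inner:
  assumes "u \<in> hole_cells"
  shows "unshift u \<in> inner N"
proof (rule ccontr)
  assume not_inner: "unshift u \<notin> inner N"
  obtain i j where ij: "unshift u = (i, j)" by (cases "unshift u")
  have "\<exists>q. adj (i, j) q \<and> q \<notin> box N"
  proof -
    consider "i \<le> 0" | "i \<ge> int N - 1" | "j \<le> 0" | "j \<ge> int N - 1"
      using not_inner ij unfolding inner_def by fastforce
    then show ?thesis
    proof cases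
      case 1 then show ?thesis by (intro exI[of _ "(i - 1, j)"]) (auto simp: adj_def box_def)
    next
      case 2 then show ?thesis by (intro exI[of _ "(i + 1, j)"]) (auto simp: adj_def box_def)
    next
      case 3 then show ?thesis by (intro exI[of _ "(i, j - 1)"]) (auto simp: adj_def box_def)
    next
      case 4 then show ?thesis by (intro exI[of _ "(i, j + 1)"]) (auto simp: adj_def box_def)
    qed
  qed
  then obtain q where q: "adj (unshift u) q" "q \<notin> box N" using ij by auto
  have "adj u (shift q)" using q(1) adj_shift_iff[of "unshift u" q] by simp
  then have "q \<in> A0" using hole_cell_neighbours(2)[OF assms] by (simp add: mem_A0)
  then show False using q(2) A0_box by blast
qed

lemma holes_eq: "holes A = (\<lambda>u. {u}) ` hole_cells"
proof -
  have "\<exists>u. H = {u}" if "H \<in> holes A" for H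
    using hole_card[OF that] by (metis card_1_singletonE)
  then show ?thesis unfolding hole_cells_def by blast
qed

lemma card_holes: "card (holes A) = card hole_cells"
  unfolding holes_eq by (rule card_image) (simp add: inj_on_def)

lemma hole_cells_subset: "hole_cells \<subseteq> shift ` (inner N - A0)"
proof
  fix u assume "u \<in> hole_cells"
  then have "unshift u \<in> inner N - A0"
    using hole_cell_inner hole_cell_neighbours(1) by (simp add: mem_A0)
  then show "u \<in> shift ` (inner N - A0)" by (metis image_eqI shift_unshift)
qed

lemma finite_hole_cells: "finite hole_cells"
  using hole_cells_subset finite_inner by (meson finite_Diff finite_imageI finite_subset)

lemma card_holes_le: "card (holes A) \<le> card (inner N - A0)"
  unfolding card_holes
  using card_mono[OF _ hole_cells_subset] card_image_le[of "inner N - A0" shift] finite_inner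
  by (meson finite_Diff finite_imageI le_trans)

lemma tile_side_count:
  "4 * card A = card (edges adj A) + card (outer_boundary A) + 4 * card (holes A)"
proof -
  let ?sides = "Sigma A (\<lambda>t. {q. adj t q})"
  let ?hole_sides = "{(t, u). t \<in> A \<and> adj t u \<and> u \<in> hole_cells}"
  have fin: "finite ?sides" using finite_A finite_adj_neighbours by simp
  have "?sides = edges adj A \<union> outer_boundary A \<union> ?hole_sides"
    unfolding edges_def outer_boundary_def holes_eq by auto
  moreover have "edges adj A \<inter> outer_boundary A = {}"
    "(edges adj A \<union> outer_boundary A) \<inter> ?hole_sides = {}"
    unfolding edges_def outer_boundary_def holes_eq using hole_cell_neighbours(1) by auto
  ultimately have "card ?sides = card (edges adj A) + card (outer_boundary A) + card ?hole_sides"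
    using fin by (simp add: card_Un_disjoint)
  moreover have "card ?sides = 4 * card A" using finite_A finite_adj_neighbours card_adj_neighbours by simp
  moreover have "card ?hole_sides = 4 * card hole_cells"
  proof -
    have "?hole_sides = prod.swap ` Sigma hole_cells (\<lambda>u. {t. adj u t})"
    proof (intro equalityI subsetI)
      fix e assume "e \<in> ?hole_sides"
      then obtain t u where e: "e = prod.swap (u, t)" "u \<in> hole_cells" "adj u t"
        using adj_sym by auto
      then show "e \<in> prod.swap ` Sigma hole_cells (\<lambda>u. {t. adj u t})" by blast
    next
      fix e assume "e \<in> prod.swap ` Sigma hole_cells (\<lambda>u. {t. adj u t})"
      then obtain u t where "e = (t, u)" "u \<in> hole_cells" "adj u t" by auto
      then show "e \<in> ?hole_sides" using hole_cell_neighbours(2) adj_sym by blast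
    qed
    then have "card ?hole_sides = card (Sigma hole_cells (\<lambda>u. {t. adj u t}))"
      by (simp add: card_image)
    also have "\<dots> = 4 * card hole_cells"
      using finite_hole_cells finite_adj_neighbours card_adj_neighbours by simp
    finally show ?thesis .
  qed
  ultimately show ?thesis using card_holes by linarith
qed

lemma outer_boundary_le: "card (outer_boundary A) \<le> 4 * N"
proof -
  have "inner N \<subseteq> box N" using four_le_N unfolding inner_def box_def by auto
  then have "A0 \<union> (inner N - A0) \<subseteq> box N" using A0_box by blast
  then have "card (A0 \<union> (inner N - A0)) \<le> N * N" using card_mono[OF finite_box] card_box by metis
  moreover have "card (A0 \<union> (inner N - A0)) = card A0 + card (inner N - A0)"
    using finite_A0 finite_inner by (intro card_Un_disjoint) auto
  ultimately have "card A + card (holes A) \<le> N * N"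
    using card_holes_le card_A0 by linarith
  then have "real (card A + card (holes A)) \<le> real N ^ 2"
    by (simp add: power2_eq_square flip: of_nat_mult)
  then have "sqrt (real (card A + card (holes A))) \<le> real N"
    using real_sqrt_le_mono by fastforce
  then have "\<lceil>2 * sqrt (real (card A + card (holes A)))\<rceil> \<le> int (2 * N)"
    by (simp add: ceiling_le_iff)
  then have "nat \<lceil>2 * sqrt (real (card A + card (holes A)))\<rceil> \<le> 2 * N"
    by (metis nat_le_iff)
  then show ?thesis using outer_boundary_eq by simp
qed

lemma many_gaps: "(N - 1) * (N - 1) \<le> 3 * card (inner N - A0) + card (corners N - A0)"
proof -
  have "card (edges adj A) + 2 \<le> 2 * card A"
    using finite_A efficient acyclic_A adj_irrefl adj_sym
    by (intro card_edges_acyclic) (auto simp: has_cycle_eq_rel efficiently_structured_def polyomino_def)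
  moreover have "N * N \<le> card A0 + card (inner N - A0) + card (corners N - A0)"
  proof -
    have "box N \<subseteq> A0 \<union> (inner N - A0) \<union> (corners N - A0)" using frame_A0 unfolding frame_def by blast
    then have "N * N \<le> card (A0 \<union> (inner N - A0) \<union> (corners N - A0))"
      using finite_A0 finite_inner finite_corners card_box by (metis card_mono finite_Diff finite_Un)
    then show ?thesis by (meson card_Un_le le_trans add_le_mono1)
  qed
  moreover have "(N - 1) * (N - 1) + 2 * N = N * N + 1"
    using N_ge_5 by (cases N) (auto simp: algebra_simps)
  ultimately show ?thesis
    using tile_side_count outer_boundary_le card_holes_le card_A0 by linarith
qed

lemma framed_tree_A0: "framed_tree A0 N"
  using odd_N N_ge_5 A0_box frame_A0 connected_A0 acyclic_A0 gap_isolated many_gaps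
  by unfold_locales auto

end

theorem lemma9:
  fixes A :: "cell set" and N :: nat and x0 y0 :: int
  assumes "odd N" and "N \<ge> 5"
    and "efficiently_structured A"
    and "square_interior A N x0 y0"
  shows "\<forall>i j. 1 \<le> i \<and> i \<le> int N - 2 \<and> 1 \<le> j \<and> j \<le> int N - 2 \<and> odd i \<and> odd j
           \<longrightarrow> {(x0 + i, y0 + j)} \<in> holes A"
proof (intro allI impI)
  fix i j :: int
  assume ij: "1 \<le> i \<and> i \<le> int N - 2 \<and> 1 \<le> j \<and> j \<le> int N - 2 \<and> odd i \<and> odd j"
  interpret P: square_polyomino A N x0 y0 by unfold_locales (use assms in auto)
  interpret T: framed_tree P.A0 N by (rule P.framed_tree_A0)
  have "(i, j) \<notin> P.A0" using T.odd_odd_not_tile ij by simp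
  moreover have "(i, j) \<in> inner N" using ij unfolding inner_def by simp
  ultimately show "{(x0 + i, y0 + j)} \<in> holes A"
    using P.inner_gap_hole(2)[of "(x0 + i, y0 + j)"]
    by (simp add: P.mem_A0 P.shift_def P.unshift_def)
qed

end
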